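(* Let $X$ be a set and let $R$ be a topology expander over $X$. Then the least fixed point $\mu\tau.\,R(\tau)$ of $R$ (which exists since the topologies on $X$ form a complete lattice under inclusion and $R$ is monotone) is a Noetherian topology on $X$.
   Context: A topological space is Noetherian if every subset is compact; equivalently, every increasing sequence $(U_i)_{i\in\mathbb N}$ of open sets satisfies $\bigcup_{i\in\mathbb N}U_i=\bigcup_{i\le j}U_i$ for some $j$. A topology $\tau$ is Noetherian if $(X,\tau)$ is. A refinement function over a set $X$ is a map $R$ from topologies on $X$ to topologies on $X$ such that (i) $\tau\subseteq\tau'$ implies $R(\tau)\subseteq R(\tau')$, and (ii) $R(\tau)$ is Noetherian whenever $\tau$ is. For a topology $\tau$ on $X$ and a subset $H\subseteq X$ (typically closed), the subset restriction $\tau|_H$ is the topology on $X$ generated by the sets $U\cap H$ for $U\in\tau$. A topology expander is a refinement function $R$ such that for every Noetherian topology $\tau$ with $\tau\subseteq R(\tau)$ and every set $H$ closed in $\tau$, one has $R(\tau)|_H = R(\tau|_H)|_H$. *)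

theory Defs
  imports "HOL-Analysis.Analysis"
begin

text \<open>Topologies on a carrier set X are values of the library type topology with
  topspace equal to X. Inclusion of topologies compares their open sets.\<close>

definition top_le :: "'a topology \<Rightarrow> 'a topology \<Rightarrow> bool" where
  "top_le \<tau> \<tau>' \<longleftrightarrow> (\<forall>U. openin \<tau> U \<longrightarrow> openin \<tau>' U)"

definition noetherian_top :: "'a topology \<Rightarrow> bool" where
  "noetherian_top \<tau> \<longleftrightarrow> (\<forall>S. S \<subseteq> topspace \<tau> \<longrightarrow> compactin \<tau> S)"

definition refinement_function :: "'a set \<Rightarrow> ('a topology \<Rightarrow> 'a topology) \<Rightarrow> bool" where
  "refinement_function X R \<longleftrightarrow>
     (\<forall>\<tau>. topspace \<tau> = X \<longrightarrow> topspace (R \<tau>) = X) \<and>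
     (\<forall>\<tau> \<tau>'. topspace \<tau> = X \<and> topspace \<tau>' = X \<and> top_le \<tau> \<tau>' \<longrightarrow> top_le (R \<tau>) (R \<tau>')) \<and>
     (\<forall>\<tau>. topspace \<tau> = X \<and> noetherian_top \<tau> \<longrightarrow> noetherian_top (R \<tau>))"

text \<open>Subset restriction: the topology on X generated by the sets U \<inter> H, U open in \<tau>
  (X itself is added to the generators so that the carrier is X, as the
  generated topology on X always contains X).\<close>
definition subset_restr :: "'a set \<Rightarrow> 'a topology \<Rightarrow> 'a set \<Rightarrow> 'a topology" where
  "subset_restr X \<tau> H = topology_generated_by (insert X {U \<inter> H | U. openin \<tau> U})"

definition topology_expander :: "'a set \<Rightarrow> ('a topology \<Rightarrow> 'a topology) \<Rightarrow> bool" where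
  "topology_expander X R \<longleftrightarrow> refinement_function X R \<and>
     (\<forall>\<tau> H. topspace \<tau> = X \<and> noetherian_top \<tau> \<and> top_le \<tau> (R \<tau>) \<and> closedin \<tau> H \<longrightarrow>
        subset_restr X (R \<tau>) H = subset_restr X (R (subset_restr X \<tau> H)) H)"

definition is_least_fixpoint :: "'a set \<Rightarrow> ('a topology \<Rightarrow> 'a topology) \<Rightarrow> 'a topology \<Rightarrow> bool" where
  "is_least_fixpoint X R \<tau> \<longleftrightarrow> topspace \<tau> = X \<and> R \<tau> = \<tau> \<and>
     (\<forall>\<sigma>. topspace \<sigma> = X \<and> R \<sigma> = \<sigma> \<longrightarrow> top_le \<tau> \<sigma>)"

end

theory Submission
  imports Defs
begin

text \<open>The least fixed point is the join of the tower of transfinite iterates of R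
  from the bottom topology, and the tower is well ordered. R preserves Noetherianity, so
  only joins D of Noetherian tower elements need an argument. A bad sequence for the join
  can be refined to one whose open sets \<open>V\<^sub>n\<close> are open in tower elements below D;
  choose such a sequence minimal in the sense of Nash-Williams, \<open>\<rho>\<^sub>n\<close> being the least
  tower element in which \<open>V\<^sub>n\<close> is open. Minimality forces \<open>\<rho>\<^sub>n = R \<tau>\<^sub>n\<close> with
  \<open>\<tau>\<^sub>n < \<rho>\<^sub>n\<close>. Along the infinitely many indices where the rank increases, the
  \<open>\<tau>\<^sub>n\<close> increase and the closures \<open>H\<^sub>n\<close> of the tails of the sequence decrease; the
  join \<open>\<nu>\<close> of the restrictions \<open>\<tau>\<^sub>n|H\<^sub>n\<close> is Noetherian, again by minimality,
  hence so is \<open>R \<nu>\<close>. But by the expander property \<open>V\<^sub>n \<inter> H\<^sub>n\<close> is the trace of an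
  \<open>R \<nu>\<close>-open set, which yields a bad sequence for \<open>R \<nu>\<close>.\<close>

lemma top_le_refl [simp]: "top_le t t"
  by (simp add: top_le_def)

lemma top_le_trans [trans]: "top_le r s \<Longrightarrow> top_le s t \<Longrightarrow> top_le r t"
  by (simp add: top_le_def)

lemma top_le_antisym: "top_le s t \<Longrightarrow> top_le t s \<Longrightarrow> s = t"
  by (auto simp: top_le_def topology_eq)

lemma top_le_topology_generated_by:
  "(\<And>g. g \<in> G \<Longrightarrow> openin t g) \<Longrightarrow> top_le (topology_generated_by G) t"
  unfolding top_le_def openin_topology_generated_by_iff
  using generate_topology_on_coarsest[OF istopology_openin] by blast

lemma generate_topology_on_local_base:
  assumes "generate_topology_on G V" and "\<And>a b. a \<in> G \<Longrightarrow> b \<in> G \<Longrightarrow> a \<inter> b \<in> G"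
  shows "\<forall>y\<in>V. \<exists>g\<in>G. y \<in> g \<and> g \<subseteq> V"
  using assms(1)
proof induction
  case (Int a b)
  show ?case
  proof
    fix y assume y: "y \<in> a \<inter> b"
    obtain g1 g2 where "g1 \<in> G" "y \<in> g1" "g1 \<subseteq> a" "g2 \<in> G" "y \<in> g2" "g2 \<subseteq> b"
      using Int.IH y by (meson IntD1 IntD2)
    with assms(2)[of g1 g2] show "\<exists>g\<in>G. y \<in> g \<and> g \<subseteq> a \<inter> b" by blast
  qed
next
  case (UN K)
  show ?case
  proof
    fix y assume "y \<in> \<Union>K"
    then obtain k where "k \<in> K" "y \<in> k" by blast
    with UN.IH obtain g where "g \<in> G" "y \<in> g" "g \<subseteq> k" by blast
    with \<open>k \<in> K\<close> show "\<exists>g\<in>G. y \<in> g \<and> g \<subseteq> \<Union>K" by blast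
  qed
qed auto

definition tsup :: "'a set \<Rightarrow> 'a topology set \<Rightarrow> 'a topology" where
  "tsup X D = topology_generated_by (insert X (\<Union>d\<in>D. Collect (openin d)))"

lemma topspace_tsup: "(\<And>d. d \<in> D \<Longrightarrow> topspace d = X) \<Longrightarrow> topspace (tsup X D) = X"
  unfolding tsup_def topology_generated_by_topspace
  by (auto dest: openin_subset)

lemma tsup_upper: "d \<in> D \<Longrightarrow> top_le d (tsup X D)"
  unfolding top_le_def tsup_def by (auto intro: topology_generated_by_Basis)

lemma tsup_least:
  "topspace t = X \<Longrightarrow> (\<And>d. d \<in> D \<Longrightarrow> top_le d t) \<Longrightarrow> top_le (tsup X D) t"
  unfolding tsup_def by (rule top_le_topology_generated_by) (auto simp: top_le_def)

text \<open>X is a generator of tsup X D so that the join of the empty family has carrier X;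
  every other open set of the join of a chain is a union of sets open in its members.\<close>

lemma openin_tsup_chainD:
  assumes X: "\<And>d. d \<in> D \<Longrightarrow> topspace d = X"
    and chain: "\<And>a b. a \<in> D \<Longrightarrow> b \<in> D \<Longrightarrow> top_le a b \<or> top_le b a"
    and V: "openin (tsup X D) V" "V \<noteq> X" "y \<in> V"
  shows "\<exists>d\<in>D. \<exists>U. openin d U \<and> y \<in> U \<and> U \<subseteq> V"
proof -
  let ?G = "insert X (\<Union>d\<in>D. Collect (openin d))"
  have sub: "g \<subseteq> X" if "g \<in> ?G" for g
    using that X by (auto dest: openin_subset)
  have "a \<inter> b \<in> ?G" if ab: "a \<in> ?G" "b \<in> ?G" for a b
  proof -
    consider "a = X" | "b = X" | d1 d2 where "d1 \<in> D" "openin d1 a" "d2 \<in> D" "openin d2 b"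
      using ab by blast
    then show ?thesis
    proof cases
      case 1
      then show ?thesis using ab(2) sub[OF ab(2)] by (simp add: Int_absorb1)
    next
      case 2
      then show ?thesis using ab(1) sub[OF ab(1)] by (simp add: Int_absorb2)
    next
      case 3
      then have "openin d1 (a \<inter> b) \<or> openin d2 (a \<inter> b)"
        using chain[of d1 d2] by (auto simp: top_le_def)
      then show ?thesis using 3 by blast
    qed
  qed
  moreover have "generate_topology_on ?G V"
    using V(1) unfolding tsup_def openin_topology_generated_by_iff .
  ultimately obtain g where "g \<in> ?G" "y \<in> g" "g \<subseteq> V"
    using generate_topology_on_local_base V(3) by metis
  moreover have "V \<subseteq> X"
    using openin_subset[OF V(1)] topspace_tsup[OF X] by blast
  ultimately have "g \<noteq> X" using V(2) by blast
  then show ?thesis using \<open>g \<in> ?G\<close> \<open>y \<in> g\<close> \<open>g \<subseteq> V\<close> by blast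
qed

lemma topspace_subset_restr: "topspace t = X \<Longrightarrow> topspace (subset_restr X t H) = X"
  unfolding subset_restr_def topology_generated_by_topspace by (auto dest: openin_subset)

lemma openin_subset_restr:
  assumes "topspace t = X"
  shows "openin (subset_restr X t H) V \<longleftrightarrow> V = X \<or> (\<exists>U. openin t U \<and> V = U \<inter> H)"
    (is "_ \<longleftrightarrow> ?restr V")
proof
  have sub: "S \<subseteq> X" if "?restr S" for S
    using that assms by (auto dest: openin_subset)
  have "istopology ?restr"
    unfolding istopology_def
  proof (intro conjI allI impI)
    fix S T assume S: "?restr S" and T: "?restr T"
    show "?restr (S \<inter> T)"
    proof (cases "S = X \<or> T = X")
      case True
      then show ?thesis using sub[OF S] sub[OF T] S T by (metis Int_absorb1 Int_absorb2)
    next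
      case False
      then obtain U U' where "openin t U" "S = U \<inter> H" "openin t U'" "T = U' \<inter> H"
        using S T by blast
      then have "openin t (U \<inter> U') \<and> S \<inter> T = (U \<inter> U') \<inter> H"
        by blast
      then show ?thesis by blast
    qed
  next
    fix K assume K: "\<forall>S\<in>K. ?restr S"
    show "?restr (\<Union>K)"
    proof (cases "X \<in> K")
      case True
      then have "\<Union>K = X" using K sub by blast
      then show ?thesis by blast
    next
      case False
      then obtain f where "\<forall>S\<in>K. openin t (f S) \<and> S = f S \<inter> H"
        using K by metis
      then have "openin t (\<Union>(f ` K)) \<and> \<Union>K = \<Union>(f ` K) \<inter> H"
        by auto
      then show ?thesis by blast
    qed
  qed
  then show "openin (subset_restr X t H) V \<Longrightarrow> ?restr V"
    unfolding subset_restr_def openin_topology_generated_by_iff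
    by (rule generate_topology_on_coarsest) auto
qed (auto simp: subset_restr_def intro: topology_generated_by_Basis)

definition bad_sequence :: "'a topology set \<Rightarrow> (nat \<Rightarrow> 'a) \<Rightarrow> (nat \<Rightarrow> 'a set) \<Rightarrow> bool" where
  "bad_sequence T x V \<longleftrightarrow>
     (\<forall>n. (\<exists>t\<in>T. openin t (V n)) \<and> x n \<in> V n) \<and> (\<forall>m n. m < n \<longrightarrow> x n \<notin> V m)"

lemma bad_sequenceD:
  assumes "bad_sequence T x V"
  shows "\<exists>t\<in>T. openin t (V n)" and "x n \<in> V n" and "m < n \<Longrightarrow> x n \<notin> V m"
  using assms unfolding bad_sequence_def by blast+

lemma bad_sequence_mono:
  assumes "bad_sequence T x V" and "\<And>t U. t \<in> T \<Longrightarrow> openin t U \<Longrightarrow> \<exists>t'\<in>T'. openin t' U"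
  shows "bad_sequence T' x V"
  using assms unfolding bad_sequence_def by metis

lemma bad_sequence_shrink:
  assumes "bad_sequence T x V" and "\<And>n. U n \<subseteq> V n" "\<And>n. x n \<in> U n" "\<And>n. \<exists>t\<in>T'. openin t (U n)"
  shows "bad_sequence T' x U"
  using assms unfolding bad_sequence_def by blast

lemma bad_sequence_prefix_closed:
  assumes "\<And>n. \<exists>x' V'. bad_sequence T x' V' \<and> (\<forall>i\<le>n. x' i = x i \<and> V' i = V i)"
  shows "bad_sequence T x V"
  unfolding bad_sequence_def
proof (intro conjI allI impI)
  fix n
  obtain x' V' where "bad_sequence T x' V'" "x' n = x n" "V' n = V n"
    using assms[of n] by blast
  then show "\<exists>t\<in>T. openin t (V n)" "x n \<in> V n"
    using bad_sequenceD(1,2) by metis+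
next
  fix m n :: nat assume "m < n"
  obtain x' V' where "bad_sequence T x' V'" "\<forall>i\<le>n. x' i = x i \<and> V' i = V i"
    using assms[of n] by blast
  then show "x n \<notin> V m"
    using bad_sequenceD(3) \<open>m < n\<close> by (metis less_imp_le order_refl)
qed

lemma bad_sequence_topspace:
  assumes "bad_sequence T x V" and "\<And>t. t \<in> T \<Longrightarrow> topspace t = X"
  shows "x n \<in> X" and "V n \<noteq> X"
proof -
  have "V m \<subseteq> X" for m
    using assms unfolding bad_sequence_def by (metis openin_subset)
  then show "x n \<in> X" for n
    using assms(1) unfolding bad_sequence_def by blast
  then show "V n \<noteq> X"
    using assms(1) unfolding bad_sequence_def by (metis lessI)
qed

lemma bad_sequence_not_noetherian:
  assumes "bad_sequence {t} x V"
  shows "\<not> noetherian_top t"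
proof
  assume "noetherian_top t"
  moreover have "range x \<subseteq> topspace t"
    using assms openin_subset unfolding bad_sequence_def by fast
  ultimately have "compactin t (range x)"
    unfolding noetherian_top_def by blast
  moreover have "\<forall>U\<in>range V. openin t U" "range x \<subseteq> \<Union>(range V)"
    using assms unfolding bad_sequence_def by auto
  ultimately obtain I where "finite I" "range x \<subseteq> \<Union>(V ` I)"
    unfolding compactin_def by (metis finite_subset_image)
  moreover obtain k where "\<forall>i\<in>I. i < k"
    using \<open>finite I\<close> finite_nat_bounded by blast
  ultimately show False
    using assms unfolding bad_sequence_def by blast
qed

text \<open>Greedily pick a point outside the finitely many cover members chosen so far,
  together with a cover member containing it.\<close>

lemma not_compactin_bad_sequence:
  assumes "S \<subseteq> topspace t" "\<not> compactin t S"
  obtains x V where "bad_sequence {t} x V"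
proof -
  obtain \<U> where \<U>: "\<forall>U\<in>\<U>. openin t U" "S \<subseteq> \<Union>\<U>"
    and no_subcover: "\<not> (\<exists>F. finite F \<and> F \<subseteq> \<U> \<and> S \<subseteq> \<Union>F)"
    using assms unfolding compactin_def by blast
  have "\<forall>F. \<exists>p. finite F \<and> F \<subseteq> \<U> \<longrightarrow> fst p \<in> S - \<Union>F \<and> snd p \<in> \<U> \<and> fst p \<in> snd p"
  proof
    fix F
    show "\<exists>p. finite F \<and> F \<subseteq> \<U> \<longrightarrow> fst p \<in> S - \<Union>F \<and> snd p \<in> \<U> \<and> fst p \<in> snd p"
    proof (cases "finite F \<and> F \<subseteq> \<U>")
      case True
      then obtain y where "y \<in> S" "y \<notin> \<Union>F" using no_subcover by blast
      moreover obtain U where "U \<in> \<U>" "y \<in> U" using \<U>(2) \<open>y \<in> S\<close> by blast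
      ultimately show ?thesis by (intro exI[of _ "(y, U)"]) simp
    qed blast
  qed
  then obtain c where c: "\<And>F. finite F \<Longrightarrow> F \<subseteq> \<U> \<Longrightarrow>
      fst (c F) \<in> S - \<Union>F \<and> snd (c F) \<in> \<U> \<and> fst (c F) \<in> snd (c F)"
    by metis
  define F where "F = rec_nat {} (\<lambda>_ F. insert (snd (c F)) F)"
  have F_Suc: "F (Suc n) = insert (snd (c (F n))) (F n)" for n
    by (simp add: F_def)
  have F: "finite (F n)" "F n \<subseteq> \<U>" for n
    by (induction n) (simp_all add: F_def F_Suc c)
  have F_mono: "snd (c (F m)) \<in> F n" if "m < n" for m n
    using that by (induction n) (auto simp: F_Suc less_Suc_eq)
  have "bad_sequence {t} (\<lambda>n. fst (c (F n))) (\<lambda>n. snd (c (F n)))"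
    unfolding bad_sequence_def
  proof (intro conjI allI impI)
    fix n
    show "\<exists>t'\<in>{t}. openin t' (snd (c (F n)))" "fst (c (F n)) \<in> snd (c (F n))"
      using c[OF F] \<U>(1) by auto
  next
    fix m n :: nat assume "m < n"
    then show "fst (c (F n)) \<notin> snd (c (F m))"
      using c[OF F, of n] F_mono by blast
  qed
  then show ?thesis by (rule that)
qed

lemma noetherian_top_iff_no_bad_sequence:
  "noetherian_top t \<longleftrightarrow> (\<forall>x V. \<not> bad_sequence {t} x V)"
  using bad_sequence_not_noetherian not_compactin_bad_sequence
  unfolding noetherian_top_def by metis

lemma noetherian_top_coarser:
  assumes "noetherian_top t'" "top_le t t'"
  shows "noetherian_top t"
  using assms bad_sequence_mono[of "{t}" _ _ "{t'}"]
  unfolding noetherian_top_iff_no_bad_sequence top_le_def by blast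

lemma wellorder_seq_mono_subseq:
  fixes a :: "nat \<Rightarrow> 'a::wellorder"
  shows "\<exists>p::nat \<Rightarrow> nat. strict_mono p \<and> mono (a \<circ> p)"
proof -
  obtain f where f: "strict_mono f" "monoseq (a \<circ> f)"
    using seq_monosub[of a] by (auto simp: o_def)
  show ?thesis
  proof (cases "mono (a \<circ> f)")
    case True
    with f(1) show ?thesis by blast
  next
    case False
    then have antimono: "m \<le> n \<Longrightarrow> a (f n) \<le> a (f m)" for m n
      using f(2) unfolding monoseq_def mono_def by auto
    define v where "v = (LEAST v. v \<in> range (a \<circ> f))"
    have "v \<in> range (a \<circ> f)"
      unfolding v_def by (rule LeastI) (rule rangeI)
    then obtain N where "a (f N) = v" by auto
    then have N: "a (f N) \<le> a (f k)" for k
      unfolding v_def by (auto intro: Least_le)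
    define p where "p k = f (N + k)" for k
    have "strict_mono p" using f(1) unfolding p_def strict_mono_def by simp
    moreover have "(a \<circ> p) k = a (f N)" for k
      using antimono[of N "N + k"] N[of "N + k"] unfolding p_def by simp
    ultimately show ?thesis by (auto simp: mono_def)
  qed
qed

text \<open>Nash-Williams' minimal bad sequence construction, abstracted: choose the terms one
  at a time, each time minimising the rank of the next term over all P-sequences extending
  the prefix chosen so far. This needs P to be determined by the finite prefixes.\<close>

lemma minimal_sequence:
  fixes P :: "(nat \<Rightarrow> 'b) \<Rightarrow> bool" and rank :: "'b \<Rightarrow> 'c \<Rightarrow> bool" and le :: "'c \<Rightarrow> 'c \<Rightarrow> bool"
  assumes least: "\<And>C. C \<subseteq> T \<Longrightarrow> C \<noteq> {} \<Longrightarrow> \<exists>m\<in>C. \<forall>c\<in>C. le m c"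
    and ranked: "\<And>z n. P z \<Longrightarrow> \<exists>r\<in>T. rank (z n) r"
    and prefix_closed: "\<And>z. (\<And>n. \<exists>z'. P z' \<and> (\<forall>i\<le>n. z' i = z i)) \<Longrightarrow> P z"
    and "P z0"
  shows "\<exists>z \<rho>. P z \<and> (\<forall>n. \<rho> n \<in> T \<and> rank (z n) (\<rho> n)) \<and>
    (\<forall>N z' r. P z' \<and> (\<forall>i<N. z' i = z i) \<and> r \<in> T \<and> rank (z' N) r \<longrightarrow> le (\<rho> N) r)"
proof -
  define minimal where "minimal p n zr \<longleftrightarrow> P (fst zr) \<and> (\<forall>i<n. fst zr i = p i) \<and>
      snd zr \<in> T \<and> rank (fst zr n) (snd zr) \<and>
      (\<forall>z' r'. P z' \<and> (\<forall>i<n. z' i = p i) \<and> r' \<in> T \<and> rank (z' n) r' \<longrightarrow> le (snd zr) r')"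
    for p n zr
  define ext where "ext p n = (SOME zr. minimal p n zr)" for p n
  have ext: "minimal p n (ext p n)" if "P z'" "\<forall>i<n. z' i = p i" for z' p n
  proof -
    define C where "C = {r\<in>T. \<exists>z. P z \<and> (\<forall>i<n. z i = p i) \<and> rank (z n) r}"
    have "C \<noteq> {}"
      using ranked[of z' n] that unfolding C_def by blast
    then obtain m where "m \<in> C" "\<forall>c\<in>C. le m c"
      using least[of C] unfolding C_def by blast
    then obtain z where "minimal p n (z, m)"
      unfolding C_def minimal_def by auto
    then show ?thesis unfolding ext_def by (rule someI)
  qed
  define prefix where "prefix = rec_nat (\<lambda>_. undefined) (\<lambda>n p. p(n := fst (ext p n) n))"
  have prefix_Suc: "prefix (Suc n) = (prefix n)(n := fst (ext (prefix n) n) n)" for n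
    by (simp add: prefix_def)
  have extendable: "\<exists>z'. P z' \<and> (\<forall>i<n. z' i = prefix n i)" for n
  proof (induction n)
    case 0
    then show ?case using \<open>P z0\<close> by blast
  next
    case (Suc n)
    then have "minimal (prefix n) n (ext (prefix n) n)"
      using ext by blast
    then show ?case
      unfolding minimal_def by (intro exI[of _ "fst (ext (prefix n) n)"]) (auto simp: prefix_Suc less_Suc_eq)
  qed
  define z where "z n = fst (ext (prefix n) n) n" for n
  define \<rho> where "\<rho> n = snd (ext (prefix n) n)" for n
  have min: "minimal (prefix n) n (ext (prefix n) n)" for n
    using extendable ext by blast
  have prefix_z: "i < n \<Longrightarrow> prefix n i = z i" for i n
    by (induction n) (auto simp: prefix_Suc z_def less_Suc_eq)
  have "P z"
  proof (rule prefix_closed)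
    fix n
    obtain z' where "P z'" "\<forall>i<Suc n. z' i = prefix (Suc n) i"
      using extendable by blast
    then show "\<exists>z'. P z' \<and> (\<forall>i\<le>n. z' i = z i)"
      using prefix_z by (intro exI[of _ z']) auto
  qed
  moreover have "\<rho> n \<in> T \<and> rank (z n) (\<rho> n)" for n
    using min[of n] unfolding minimal_def z_def \<rho>_def by blast
  moreover have "le (\<rho> N) r" if "P z'" "\<forall>i<N. z' i = z i" "r \<in> T" "rank (z' N) r" for N z' r
    using min[of N] that prefix_z unfolding minimal_def \<rho>_def by auto
  ultimately show ?thesis by blast
qed

locale refinement =
  fixes X :: "'a set" and R :: "'a topology \<Rightarrow> 'a topology"
  assumes refinement_function: "refinement_function X R"
begin

lemma topspace_R: "topspace t = X \<Longrightarrow> topspace (R t) = X"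
  using refinement_function unfolding refinement_function_def by blast

lemma R_mono: "topspace s = X \<Longrightarrow> topspace t = X \<Longrightarrow> top_le s t \<Longrightarrow> top_le (R s) (R t)"
  using refinement_function unfolding refinement_function_def by blast

lemma noetherian_R: "topspace t = X \<Longrightarrow> noetherian_top t \<Longrightarrow> noetherian_top (R t)"
  using refinement_function unfolding refinement_function_def by blast

text \<open>The transfinite iterates of R starting from the bottom topology tsup X {}.\<close>

inductive_set tower :: "'a topology set" where
  R: "t \<in> tower \<Longrightarrow> R t \<in> tower"
| tsup: "(\<And>d. d \<in> D \<Longrightarrow> d \<in> tower) \<Longrightarrow> tsup X D \<in> tower"

lemma topspace_tower: "t \<in> tower \<Longrightarrow> topspace t = X"
  by (induction rule: tower.induct) (simp_all add: topspace_R topspace_tsup)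

lemma tsup_least_tower:
  "t \<in> tower \<Longrightarrow> (\<And>d. d \<in> D \<Longrightarrow> top_le d t) \<Longrightarrow> top_le (tsup X D) t"
  by (rule tsup_least) (simp_all add: topspace_tower)

lemma tower_le_R: "t \<in> tower \<Longrightarrow> top_le t (R t)"
proof (induction rule: tower.induct)
  case (R t)
  then show ?case by (simp add: R_mono topspace_tower tower.R)
next
  case (tsup D)
  have "top_le d (R (tsup X D))" if "d \<in> D" for d
  proof -
    have "top_le d (R d)" using tsup.IH that by blast
    also have "top_le (R d) (R (tsup X D))"
      using tsup.hyps that by (intro R_mono tsup_upper) (auto simp: topspace_tower tower.tsup)
    finally show ?thesis .
  qed
  then show ?case
    using tsup.hyps by (intro tsup_least) (auto simp: topspace_R topspace_tower tower.tsup)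
qed

lemma tower_le_prefixpoint:
  assumes "topspace s = X" "top_le (R s) s" "t \<in> tower"
  shows "top_le t s"
  using assms(3)
proof (induction rule: tower.induct)
  case (R t)
  then have "top_le (R t) (R s)" by (simp add: R_mono assms(1) topspace_tower)
  then show ?case using assms(2) top_le_trans by blast
qed (simp add: tsup_least assms(1))

text \<open>Comparability as in Zermelo's proof of the well-ordering theorem.\<close>

definition normal :: "'a topology \<Rightarrow> bool" where
  "normal t \<longleftrightarrow> (\<forall>s\<in>tower. top_le s t \<and> s \<noteq> t \<longrightarrow> top_le (R s) t)"

lemma normal_dichotomy:
  assumes "t \<in> tower" "normal t" "s \<in> tower"
  shows "top_le s t \<or> top_le (R t) s"
  using assms(3)
proof (induction rule: tower.induct)
  case (R s)
  consider "top_le (R t) s" | "s = t" | "top_le s t" "s \<noteq> t"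
    using R.IH by blast
  then show ?case
  proof cases
    case 1
    then show ?thesis using tower_le_R[OF R.hyps] top_le_trans by blast
  next
    case 3
    then show ?thesis using assms(2) R.hyps unfolding normal_def by blast
  qed simp
next
  case (tsup D)
  show ?case
  proof (cases "\<forall>d\<in>D. top_le d t")
    case True
    then show ?thesis using assms(1) tsup_least_tower by blast
  next
    case False
    then obtain d where "d \<in> D" "top_le (R t) d" using tsup.IH by blast
    then show ?thesis using tsup_upper top_le_trans by blast
  qed
qed

lemma normal_R:
  assumes "t \<in> tower" "normal t"
  shows "normal (R t)"
  unfolding normal_def
proof (intro ballI impI)
  fix s assume s: "s \<in> tower" "top_le s (R t) \<and> s \<noteq> R t"
  then have "top_le s t"
    using normal_dichotomy[OF assms s(1)] top_le_antisym by blast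
  show "top_le (R s) (R t)"
  proof (cases "s = t")
    case False
    then have "top_le (R s) t" using assms(2) s(1) \<open>top_le s t\<close> unfolding normal_def by blast
    then show ?thesis using tower_le_R[OF assms(1)] top_le_trans by blast
  qed simp
qed

lemma normal_tsup:
  assumes D: "D \<subseteq> tower" "\<And>d. d \<in> D \<Longrightarrow> normal d"
  shows "normal (tsup X D)"
  unfolding normal_def
proof (intro ballI impI)
  fix s assume s: "s \<in> tower" "top_le s (tsup X D) \<and> s \<noteq> tsup X D"
  have dichotomy: "top_le y d \<or> top_le (R d) y" if "d \<in> D" "y \<in> tower" for d y
    using normal_dichotomy D that by blast
  show "top_le (R s) (tsup X D)"
  proof (cases "\<forall>d\<in>D. top_le (R d) s")
    case True
    then have "top_le (tsup X D) s"
      using D(1) s(1) tower_le_R by (blast intro: tsup_least_tower top_le_trans)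
    then show ?thesis using s(2) top_le_antisym by blast
  next
    case False
    then obtain d where d: "d \<in> D" "\<not> top_le (R d) s" by blast
    then have "top_le s d" using dichotomy s(1) by blast
    consider "s \<noteq> d" | "s = d" "\<exists>d'\<in>D. top_le (R d) d'" | "s = d" "\<forall>d'\<in>D. top_le d' d"
      using dichotomy D(1) d(1) by blast
    then show ?thesis
    proof cases
      case 1
      then have "top_le (R s) d" using D(2) d(1) s(1) \<open>top_le s d\<close> unfolding normal_def by blast
      then show ?thesis using d(1) tsup_upper top_le_trans by blast
    next
      case 2
      then show ?thesis using tsup_upper top_le_trans by blast
    next
      case 3
      then have "top_le (tsup X D) s" using D(1) d(1) tsup_least_tower by blast
      then show ?thesis using s(2) top_le_antisym by blast
    qed
  qed
qed

lemma normal_tower: "t \<in> tower \<Longrightarrow> normal t"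
  by (induction rule: tower.induct) (auto intro: normal_R normal_tsup)

lemma tower_dichotomy: "t \<in> tower \<Longrightarrow> s \<in> tower \<Longrightarrow> top_le s t \<or> top_le (R t) s"
  using normal_dichotomy normal_tower by blast

lemma tower_chain: "s \<in> tower \<Longrightarrow> t \<in> tower \<Longrightarrow> top_le s t \<or> top_le t s"
  using tower_dichotomy tower_le_R top_le_trans by blast

lemma tower_has_least:
  assumes "S \<subseteq> tower" "S \<noteq> {}"
  shows "\<exists>m\<in>S. \<forall>s\<in>S. top_le m s"
proof -
  define L where "L = {t\<in>tower. \<forall>s\<in>S. top_le t s}"
  define m where "m = tsup X L"
  have "m \<in> tower" unfolding m_def L_def by (rule tower.tsup) blast
  have m_lower: "top_le m s" if "s \<in> S" for s
    unfolding m_def using that assms(1) by (intro tsup_least_tower) (auto simp: L_def)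
  show ?thesis
  proof (cases "m \<in> S")
    case False
    txt \<open>Then R m is again a lower bound of S, so it lies below m, and m is above the
      whole tower.\<close>
    have "top_le (R m) s" if "s \<in> S" for s
      using tower_dichotomy[OF \<open>m \<in> tower\<close>, of s] m_lower[OF that] that False assms(1)
        top_le_antisym by blast
    then have "R m \<in> L" unfolding L_def using \<open>m \<in> tower\<close> tower.R by blast
    then have "top_le (R m) m" unfolding m_def by (rule tsup_upper)
    then have "top_le s m" if "s \<in> S" for s
      using that assms(1) tower_le_prefixpoint topspace_tower[OF \<open>m \<in> tower\<close>] by blast
    then have "m \<in> S" using assms(2) m_lower top_le_antisym by blast
    with False show ?thesis by blast
  qed (use m_lower in blast)
qed

lemma tower_successor_or_limit:
  assumes "r \<in> tower"
  shows "(\<exists>t\<in>tower. top_le t r \<and> t \<noteq> r \<and> R t = r) \<or> r = tsup X {t\<in>tower. top_le t r \<and> t \<noteq> r}"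
proof -
  define L where "L = {t\<in>tower. top_le t r \<and> t \<noteq> r}"
  define m where "m = tsup X L"
  have "m \<in> tower" unfolding m_def L_def by (rule tower.tsup) blast
  have "top_le m r" unfolding m_def by (rule tsup_least_tower[OF assms]) (simp add: L_def)
  show ?thesis
  proof (cases "m = r")
    case False
    then have "top_le (R m) r"
      using tower_dichotomy[OF \<open>m \<in> tower\<close> assms] \<open>top_le m r\<close> top_le_antisym by blast
    moreover have "R m \<notin> L"
    proof
      assume "R m \<in> L"
      then have "top_le (R m) m" unfolding m_def by (rule tsup_upper)
      then have "top_le r m"
        using tower_le_prefixpoint topspace_tower[OF \<open>m \<in> tower\<close>] assms by blast
      then show False using False \<open>top_le m r\<close> top_le_antisym by blast
    qed
    ultimately show ?thesis
      using \<open>m \<in> tower\<close> \<open>top_le m r\<close> False tower.R unfolding L_def by blast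
  qed (simp add: m_def L_def)
qed

lemma bad_sequence_tsup_tower:
  assumes "\<And>d. d \<in> D \<Longrightarrow> d \<in> tower" and bad: "bad_sequence {tsup X D} x V"
  shows "\<exists>U. bad_sequence D x U"
proof -
  have "\<exists>U. U \<subseteq> V n \<and> x n \<in> U \<and> (\<exists>d\<in>D. openin d U)" for n
  proof -
    have "topspace (tsup X D) = X"
      by (rule topspace_tsup) (simp add: assms(1) topspace_tower)
    then have "V n \<noteq> X"
      using bad_sequence_topspace(2)[OF bad] by simp
    moreover have "openin (tsup X D) (V n)" "x n \<in> V n"
      using bad_sequenceD(1,2)[OF bad] by auto
    ultimately obtain d U where "d \<in> D" "openin d U" "x n \<in> U" "U \<subseteq> V n"
      using openin_tsup_chainD[OF topspace_tower[OF assms(1)] tower_chain[OF assms(1) assms(1)]]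
      by blast
    then show ?thesis by blast
  qed
  then obtain U where "\<And>n. U n \<subseteq> V n" "\<And>n. x n \<in> U n" "\<And>n. \<exists>d\<in>D. openin d (U n)"
    by metis
  then have "bad_sequence D x U"
    by (rule bad_sequence_shrink[OF bad])
  then show ?thesis by blast
qed

definition mu :: "'a topology" where
  "mu = tsup X tower"

lemma mu_in_tower: "mu \<in> tower"
  unfolding mu_def by (rule tower.tsup)

lemma is_least_fixpoint_mu: "is_least_fixpoint X R mu"
  unfolding is_least_fixpoint_def
proof (intro conjI allI impI)
  show "topspace mu = X" by (rule topspace_tower[OF mu_in_tower])
  have "top_le (R mu) mu"
    using tower.R[OF mu_in_tower] unfolding mu_def by (rule tsup_upper)
  then show "R mu = mu"
    using tower_le_R[OF mu_in_tower] top_le_antisym by blast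
  fix s assume "topspace s = X \<and> R s = s"
  then show "top_le mu s"
    using tower_le_prefixpoint[OF _ _ mu_in_tower] by simp
qed

end

locale expander =
  fixes X :: "'a set" and R :: "'a topology \<Rightarrow> 'a topology"
  assumes topology_expander: "topology_expander X R"

sublocale expander \<subseteq> refinement
  using topology_expander unfolding topology_expander_def by unfold_locales blast

context expander
begin

lemma expander_trace:
  assumes t: "topspace t = X" "noetherian_top t" "top_le t (R t)" "closedin t H"
    and "openin (R t) V"
  shows "\<exists>W. openin (R (subset_restr X t H)) W \<and> W \<inter> H = V \<inter> H"
proof -
  let ?t' = "R (subset_restr X t H)"
  have "topspace ?t' = X"
    by (simp add: t(1) topspace_R topspace_subset_restr)
  have "openin (subset_restr X (R t) H) (V \<inter> H)"
    using assms(5) by (auto simp: openin_subset_restr t(1) topspace_R)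
  then have "openin (subset_restr X ?t' H) (V \<inter> H)"
    using topology_expander t unfolding topology_expander_def by metis
  then have "V \<inter> H = X \<or> (\<exists>U. openin ?t' U \<and> V \<inter> H = U \<inter> H)"
    by (simp add: openin_subset_restr \<open>topspace ?t' = X\<close>)
  moreover have "H \<subseteq> X"
    using closedin_subset t(1,4) by blast
  ultimately show ?thesis
    using openin_topspace[of ?t'] \<open>topspace ?t' = X\<close> by (metis inf.absorb_iff2 inf_commute inf_le2)
qed

end

locale minimal_bad_sequence = expander X R for X :: "'a set" and R +
  fixes B :: "'a topology set" and x :: "nat \<Rightarrow> 'a" and V :: "nat \<Rightarrow> 'a set"
    and \<rho> :: "nat \<Rightarrow> 'a topology"
  assumes B_tower: "B \<subseteq> tower"
    and B_down: "b \<in> B \<Longrightarrow> t \<in> tower \<Longrightarrow> top_le t b \<Longrightarrow> t \<in> B"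
    and bad: "bad_sequence B x V"
    and rank: "\<rho> n \<in> B" "openin (\<rho> n) (V n)"
    and minimal: "bad_sequence B x' V' \<Longrightarrow> \<forall>i<N. x' i = x i \<and> V' i = V i \<Longrightarrow>
      r \<in> B \<Longrightarrow> openin r (V' N) \<Longrightarrow> top_le (\<rho> N) r"
begin

lemma topspace_B: "b \<in> B \<Longrightarrow> topspace b = X"
  using B_tower topspace_tower by blast

lemma x_in_X: "x n \<in> X" and V_neq_X: "V n \<noteq> X"
  using bad_sequence_topspace[OF bad topspace_B] by blast+

text \<open>At a limit rank, x n would have a neighbourhood inside V n that is open in a smaller
  tower element, contradicting minimality.\<close>

lemma rank_successor: "\<exists>t\<in>tower. top_le t (\<rho> n) \<and> t \<noteq> \<rho> n \<and> R t = \<rho> n"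
proof -
  define L where "L = {t\<in>tower. top_le t (\<rho> n) \<and> t \<noteq> \<rho> n}"
  have "\<rho> n \<noteq> tsup X L"
  proof
    assume "\<rho> n = tsup X L"
    moreover have "x n \<in> V n"
      by (rule bad_sequenceD(2)[OF bad])
    ultimately obtain d U where d: "d \<in> L" "openin d U" "x n \<in> U" "U \<subseteq> V n"
      using openin_tsup_chainD[of L X "V n" "x n"] rank(2) V_neq_X tower_chain topspace_tower
      unfolding L_def by (metis (no_types, lifting) mem_Collect_eq)
    have "d \<in> tower" "top_le d (\<rho> n)"
      using d(1) unfolding L_def by auto
    then have "d \<in> B"
      by (rule B_down[OF rank(1)])
    have "bad_sequence B x (V(n := U))"
      using d \<open>d \<in> B\<close> bad_sequenceD(1,2)[OF bad] by (intro bad_sequence_shrink[OF bad]) auto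
    then have "top_le (\<rho> n) d"
      using minimal[of x "V(n := U)" n d] \<open>d \<in> B\<close> d(2) by simp
    then show False
      using d(1) top_le_antisym unfolding L_def by blast
  qed
  then show ?thesis
    using tower_successor_or_limit[of "\<rho> n"] rank(1) B_tower unfolding L_def by blast
qed

definition rank_pred :: "nat \<Rightarrow> 'a topology" where
  "rank_pred n = (SOME t. t \<in> tower \<and> top_le t (\<rho> n) \<and> t \<noteq> \<rho> n \<and> R t = \<rho> n)"

lemma rank_pred: "rank_pred n \<in> tower" "top_le (rank_pred n) (\<rho> n)" "rank_pred n \<noteq> \<rho> n"
  "R (rank_pred n) = \<rho> n"
  using someI_ex[OF rank_successor[unfolded Bex_def]] unfolding rank_pred_def by blast+

lemma rank_pred_in_B: "rank_pred n \<in> B"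
  using B_down[OF rank(1) rank_pred(1,2)] .

lemma topspace_rank_pred: "topspace (rank_pred n) = X"
  using rank_pred_in_B topspace_B by blast

definition records :: "nat set" where
  "records = {n. \<forall>j<n. top_le (\<rho> j) (\<rho> n) \<and> \<rho> j \<noteq> \<rho> n}"

lemma rank_le_rank_pred:
  assumes "n \<in> records" "j < n"
  shows "top_le (\<rho> j) (rank_pred n)"
proof -
  have "top_le (\<rho> j) (rank_pred n) \<or> top_le (\<rho> n) (\<rho> j)"
    using tower_dichotomy[OF rank_pred(1)[of n], of "\<rho> j"] rank_pred(4) rank(1) B_tower by auto
  then show ?thesis
    using assms top_le_antisym unfolding records_def by blast
qed

lemma rank_pred_mono:
  assumes "n \<in> records" "m \<in> records" "n \<le> m"
  shows "top_le (rank_pred n) (rank_pred m)"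
proof (cases "n = m")
  case False
  then show ?thesis
    using rank_le_rank_pred[of m n] assms rank_pred(2) top_le_trans by auto
qed simp

definition tail_closure :: "nat \<Rightarrow> 'a set" where
  "tail_closure n = rank_pred n closure_of (x ` {n..})"

lemma closedin_tail_closure: "closedin (rank_pred n) (tail_closure n)"
  unfolding tail_closure_def by simp

lemma x_in_tail_closure: "n \<le> m \<Longrightarrow> x m \<in> tail_closure n"
  unfolding tail_closure_def using x_in_X topspace_rank_pred
  by (intro subsetD[OF closure_of_subset]) auto

lemma tail_closure_antimono:
  assumes "n \<in> records" "m \<in> records" "n \<le> m"
  shows "tail_closure m \<subseteq> tail_closure n"
  unfolding tail_closure_def[of m]
proof (rule closure_of_minimal)
  show "x ` {m..} \<subseteq> tail_closure n"
    using x_in_tail_closure assms(3) by auto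
  show "closedin (rank_pred m) (tail_closure n)"
    using closedin_tail_closure[of n] rank_pred_mono[OF assms] topspace_rank_pred
    unfolding closedin_def top_le_def by simp
qed

lemma tail_closure_disjoint:
  assumes "n \<in> records" "j < n"
  shows "tail_closure n \<inter> V j = {}"
proof -
  have "openin (rank_pred n) (V j)"
    using rank_le_rank_pred[OF assms] rank(2) unfolding top_le_def by blast
  then have "closedin (rank_pred n) (X - V j)"
    using topspace_rank_pred by (metis closedin_diff closedin_topspace)
  moreover have "x ` {n..} \<subseteq> X - V j"
    using x_in_X bad_sequenceD(3)[OF bad] assms(2) by fastforce
  ultimately show ?thesis
    unfolding tail_closure_def using closure_of_minimal by fastforce
qed

text \<open>The join of the topologies \<open>\<tau>\<^sub>n|H\<^sub>n\<close> over the records n, where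
  \<open>\<tau>\<^sub>n = rank_pred n\<close> and \<open>H\<^sub>n = tail_closure n\<close>.\<close>

definition restriction_base :: "'a set set" where
  "restriction_base = insert X {U \<inter> tail_closure n | n U. n \<in> records \<and> openin (rank_pred n) U}"

definition restriction_join :: "'a topology" where
  "restriction_join = topology_generated_by restriction_base"

lemma restriction_base_subset: "g \<in> restriction_base \<Longrightarrow> g \<subseteq> X"
  unfolding restriction_base_def using topspace_rank_pred by (auto dest: openin_subset)

lemma restriction_base_Int:
  assumes "a \<in> restriction_base" "b \<in> restriction_base"
  shows "a \<inter> b \<in> restriction_base"
proof -
  have nested: "(U \<inter> tail_closure n) \<inter> (U' \<inter> tail_closure m) \<in> restriction_base"
    if "n \<in> records" "openin (rank_pred n) U" "m \<in> records" "openin (rank_pred m) U'" "n \<le> m"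
    for n U m U'
  proof -
    have "openin (rank_pred m) (U \<inter> U')"
      using rank_pred_mono that unfolding top_le_def by blast
    moreover have "(U \<inter> tail_closure n) \<inter> (U' \<inter> tail_closure m) = (U \<inter> U') \<inter> tail_closure m"
      using tail_closure_antimono that by blast
    ultimately show ?thesis using that(3) unfolding restriction_base_def by blast
  qed
  show ?thesis
  proof (cases "a = X \<or> b = X")
    case True
    then show ?thesis using assms restriction_base_subset by (metis Int_absorb1 Int_absorb2)
  next
    case False
    then obtain n U m U' where "n \<in> records" "openin (rank_pred n) U" "a = U \<inter> tail_closure n"
      "m \<in> records" "openin (rank_pred m) U'" "b = U' \<inter> tail_closure m"
      using assms unfolding restriction_base_def by blast
    then show ?thesis
      using nested[of n U m U'] nested[of m U' n U] by (metis Int_commute nat_le_linear)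
  qed
qed

lemma topspace_restriction_join: "topspace restriction_join = X"
  unfolding restriction_join_def topology_generated_by_topspace
  using restriction_base_subset by (auto simp: restriction_base_def)

lemma subset_restr_le_restriction_join:
  "n \<in> records \<Longrightarrow> top_le (subset_restr X (rank_pred n) (tail_closure n)) restriction_join"
  unfolding subset_restr_def restriction_join_def restriction_base_def
  by (rule top_le_topology_generated_by) (auto intro: topology_generated_by_Basis)

lemma openin_restriction_joinD:
  assumes "openin restriction_join W" "y \<in> W" "W \<noteq> X"
  shows "\<exists>n U. n \<in> records \<and> openin (rank_pred n) U \<and> y \<in> U \<inter> tail_closure n \<and>
    U \<inter> tail_closure n \<subseteq> W"
proof -
  have "generate_topology_on restriction_base W"
    using assms(1) unfolding restriction_join_def openin_topology_generated_by_iff .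
  then obtain g where "g \<in> restriction_base" "y \<in> g" "g \<subseteq> W"
    using generate_topology_on_local_base restriction_base_Int assms(2) by metis
  moreover have "W \<subseteq> X"
    using openin_subset[OF assms(1)] topspace_restriction_join by blast
  ultimately have "g \<noteq> X" "g \<in> restriction_base" "y \<in> g" "g \<subseteq> W" using assms(3) by blast+
  then show ?thesis unfolding restriction_base_def by blast
qed

lemma bad_sequence_splice:
  assumes nn: "mono nn" "\<And>i. nn i \<in> records"
    and U: "\<And>i. openin (rank_pred (nn i)) (U i)" "\<And>i. y i \<in> U i \<inter> tail_closure (nn i)"
    and bad_y: "\<And>i j. i < j \<Longrightarrow> y j \<notin> U i \<inter> tail_closure (nn i)"
  defines "N \<equiv> nn 0"
  shows "bad_sequence B (\<lambda>k. if k < N then x k else y (k - N)) (\<lambda>k. if k < N then V k else U (k - N))"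
  unfolding bad_sequence_def
proof (intro conjI allI impI)
  fix k
  show "\<exists>t\<in>B. openin t (if k < N then V k else U (k - N))"
    using rank U(1)[of "k - N"] rank_pred_in_B[of "nn (k - N)"] by auto
  show "(if k < N then x k else y (k - N)) \<in> (if k < N then V k else U (k - N))"
    using bad_sequenceD(2)[OF bad] U(2) by auto
next
  fix k l :: nat assume "k < l"
  show "(if l < N then x l else y (l - N)) \<notin> (if k < N then V k else U (k - N))"
  proof (cases "l < N")
    case True
    then show ?thesis using \<open>k < l\<close> bad_sequenceD(3)[OF bad] by auto
  next
    case False
    have "N \<le> nn (l - N)"
      unfolding N_def using nn(1) by (simp add: monoD)
    show ?thesis
    proof (cases "k < N")
      case True
      then have "tail_closure (nn (l - N)) \<inter> V k = {}"
        using tail_closure_disjoint nn(2) \<open>N \<le> nn (l - N)\<close> by simp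
      then show ?thesis using True False U(2)[of "l - N"] by auto
    next
      case k: False
      then have "tail_closure (nn (l - N)) \<subseteq> tail_closure (nn (k - N))"
        using \<open>k < l\<close> nn by (intro tail_closure_antimono) (auto simp: monoD)
      moreover have "y (l - N) \<notin> U (k - N) \<inter> tail_closure (nn (k - N))"
        using \<open>k < l\<close> k bad_y by simp
      ultimately show ?thesis using k False U(2)[of "l - N"] by auto
    qed
  qed
qed

lemma noetherian_restriction_join: "noetherian_top restriction_join"
  unfolding noetherian_top_iff_no_bad_sequence
proof (intro allI notI)
  fix y W assume bad_W: "bad_sequence {restriction_join} y W"
  have "\<exists>n U. n \<in> records \<and> openin (rank_pred n) U \<and> y i \<in> U \<inter> tail_closure n \<and>
      U \<inter> tail_closure n \<subseteq> W i" for i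
  proof (rule openin_restriction_joinD)
    show "openin restriction_join (W i)" "y i \<in> W i"
      using bad_sequenceD(1,2)[OF bad_W] by auto
    show "W i \<noteq> X"
      using bad_sequence_topspace(2)[OF bad_W] topspace_restriction_join by blast
  qed
  then obtain nn U where nnU: "\<And>i. nn i \<in> records" "\<And>i. openin (rank_pred (nn i)) (U i)"
    "\<And>i. y i \<in> U i \<inter> tail_closure (nn i)" "\<And>i. U i \<inter> tail_closure (nn i) \<subseteq> W i"
    by metis
  obtain p :: "nat \<Rightarrow> nat" where p: "strict_mono p" "mono (nn \<circ> p)"
    using wellorder_seq_mono_subseq by blast
  let ?N = "(nn \<circ> p) 0"
  have bad_y: "y (p j) \<notin> U (p i) \<inter> tail_closure (nn (p i))" if "i < j" for i j
    using bad_sequenceD(3)[OF bad_W] strict_monoD[OF p(1) that] nnU(4) by blast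
  have "bad_sequence B (\<lambda>k. if k < ?N then x k else (y \<circ> p) (k - ?N))
      (\<lambda>k. if k < ?N then V k else (U \<circ> p) (k - ?N))"
    by (rule bad_sequence_splice) (use p(2) nnU bad_y in \<open>auto simp: comp_def\<close>)
  then have "top_le (\<rho> ?N) (rank_pred ?N)"
    using minimal[where N = ?N] rank_pred_in_B nnU(2) by simp
  then show False
    using rank_pred(2,3) top_le_antisym by blast
qed

text \<open>Every index outside the records has an earlier index of no smaller rank.\<close>

lemma rank_le_record_rank:
  assumes "records \<subseteq> {..<N}"
  shows "\<exists>j<N. top_le (\<rho> n) (\<rho> j)"
proof (induction n rule: less_induct)
  case (less n)
  show ?case
  proof (cases "n < N")
    case False
    then have "n \<notin> records" using assms by blast
    then obtain j where "j < n" "\<not> (top_le (\<rho> j) (\<rho> n) \<and> \<rho> j \<noteq> \<rho> n)"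
      unfolding records_def by blast
    moreover have "top_le (\<rho> j) (\<rho> n) \<or> top_le (\<rho> n) (\<rho> j)"
      using tower_chain rank(1) B_tower by (meson subsetD)
    ultimately have "top_le (\<rho> n) (\<rho> j)"
      by auto
    then show ?thesis using less \<open>j < n\<close> top_le_trans by blast
  qed auto
qed

lemma bad_subsequence_below:
  assumes "strict_mono p" "\<And>k. top_le (\<rho> (p k)) t"
  shows "bad_sequence {t} (x \<circ> p) (V \<circ> p)"
  unfolding bad_sequence_def
proof (intro conjI allI impI)
  fix k
  show "\<exists>t'\<in>{t}. openin t' ((V \<circ> p) k)"
    using rank(2)[of "p k"] assms(2)[of k] unfolding top_le_def by auto
  show "(x \<circ> p) k \<in> (V \<circ> p) k"
    using bad_sequenceD(2)[OF bad] by simp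
next
  fix k l :: nat assume "k < l"
  then show "(x \<circ> p) l \<notin> (V \<circ> p) k"
    using bad_sequenceD(3)[OF bad] strict_monoD[OF assms(1)] by simp
qed

lemma infinite_records:
  assumes "\<forall>b\<in>B. noetherian_top b"
  shows "infinite records"
proof
  assume "finite records"
  then obtain N where "records \<subseteq> {..<N}"
    by (meson finite_nat_bounded)
  then obtain f where f: "\<And>n. f n < N" "\<And>n. top_le (\<rho> n) (\<rho> (f n))"
    using rank_le_record_rank by metis
  have "range f \<subseteq> {..<N}"
    using f(1) by auto
  then have "finite (range f)"
    by (rule finite_subset) simp
  then obtain j where "infinite (f -` {j})"
    by (rule inf_img_fin_domE) simp
  then obtain p :: "nat \<Rightarrow> nat" where p: "strict_mono p" "\<And>k. f (p k) = j"
    using infinite_enumerate by (metis vimage_singleton_eq)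
  then have "bad_sequence {\<rho> j} (x \<circ> p) (V \<circ> p)"
    using f(2) by (intro bad_subsequence_below) metis+
  then show False
    using bad_sequence_not_noetherian assms rank(1) by blast
qed

text \<open>The expander property moves V n, up to its trace on the tail closure, from
  \<open>R (rank_pred n) = \<rho> n\<close> to R of the subset restriction, which lies below R of the
  restriction join.\<close>

lemma trace_openin_R_restriction_join:
  assumes "\<forall>b\<in>B. noetherian_top b" "n \<in> records"
  shows "\<exists>W. openin (R restriction_join) W \<and> W \<inter> tail_closure n = V n \<inter> tail_closure n"
proof -
  obtain W where W: "openin (R (subset_restr X (rank_pred n) (tail_closure n))) W"
    "W \<inter> tail_closure n = V n \<inter> tail_closure n"
    using expander_trace[OF topspace_rank_pred] assms(1) rank_pred_in_B tower_le_R rank_pred(1)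
      closedin_tail_closure rank(2) rank_pred(4) by metis
  have "top_le (R (subset_restr X (rank_pred n) (tail_closure n))) (R restriction_join)"
    by (intro R_mono subset_restr_le_restriction_join assms(2))
      (simp_all add: topspace_subset_restr topspace_rank_pred topspace_restriction_join)
  then show ?thesis using W unfolding top_le_def by blast
qed

lemma not_all_noetherian: "\<not> (\<forall>b\<in>B. noetherian_top b)"
proof
  assume noeth: "\<forall>b\<in>B. noetherian_top b"
  define e where "e = enumerate records"
  have e: "e k \<in> records" "strict_mono e" for k
    unfolding e_def using infinite_records[OF noeth] by (simp_all add: enumerate_in_set strict_mono_enumerate)
  have "\<forall>k. \<exists>W. openin (R restriction_join) W \<and>
      W \<inter> tail_closure (e k) = V (e k) \<inter> tail_closure (e k)"
    using trace_openin_R_restriction_join[OF noeth] e(1) by blast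
  then obtain W where W: "\<And>k. openin (R restriction_join) (W k)"
    "\<And>k. W k \<inter> tail_closure (e k) = V (e k) \<inter> tail_closure (e k)"
    by metis
  have "bad_sequence {R restriction_join} (x \<circ> e) W"
    unfolding bad_sequence_def
  proof (intro conjI allI impI)
    fix k
    show "\<exists>t\<in>{R restriction_join}. openin t (W k)" using W(1) by simp
    show "(x \<circ> e) k \<in> W k"
      using W(2)[of k] x_in_tail_closure[of "e k"] bad_sequenceD(2)[OF bad] by auto
  next
    fix k l :: nat assume "k < l"
    then have "x (e l) \<in> tail_closure (e k)" "x (e l) \<notin> V (e k)"
      using strict_monoD[OF e(2) \<open>k < l\<close>] x_in_tail_closure bad_sequenceD(3)[OF bad] by auto
    then show "(x \<circ> e) l \<notin> W k" using W(2)[of k] by auto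
  qed
  moreover have "noetherian_top (R restriction_join)"
    by (simp add: noetherian_R noetherian_restriction_join topspace_restriction_join)
  ultimately show False
    using bad_sequence_not_noetherian by blast
qed

end

context expander
begin

lemma exists_minimal_bad_sequence:
  assumes "B \<subseteq> tower" "\<And>b t. b \<in> B \<Longrightarrow> t \<in> tower \<Longrightarrow> top_le t b \<Longrightarrow> t \<in> B"
    and "bad_sequence B x0 V0"
  shows "\<exists>x V \<rho>. minimal_bad_sequence X R B x V \<rho>"
proof -
  let ?P = "\<lambda>z. bad_sequence B (fst \<circ> z) (snd \<circ> z)"
  have "\<exists>z \<rho>. ?P z \<and> (\<forall>n. \<rho> n \<in> B \<and> openin (\<rho> n) (snd (z n))) \<and>
    (\<forall>N z' r. ?P z' \<and> (\<forall>i<N. z' i = z i) \<and> r \<in> B \<and> openin r (snd (z' N)) \<longrightarrow> top_le (\<rho> N) r)"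
  proof (rule minimal_sequence)
    show "\<exists>m\<in>C. \<forall>c\<in>C. top_le m c" if "C \<subseteq> B" "C \<noteq> {}" for C
      using tower_has_least that assms(1) by blast
    show "\<exists>r\<in>B. openin r (snd (z n))" if "?P z" for z n
      using bad_sequenceD(1)[OF that] by simp
    show "?P z" if prefix: "\<And>n. \<exists>z'. ?P z' \<and> (\<forall>i\<le>n. z' i = z i)" for z
    proof (rule bad_sequence_prefix_closed)
      fix n
      obtain z' where "?P z'" "\<forall>i\<le>n. z' i = z i" using prefix by blast
      then show "\<exists>x' V'. bad_sequence B x' V' \<and> (\<forall>i\<le>n. x' i = (fst \<circ> z) i \<and> V' i = (snd \<circ> z) i)"
        by (intro exI[of _ "fst \<circ> z'"] exI[of _ "snd \<circ> z'"]) simp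
    qed
    show "?P (\<lambda>n. (x0 n, V0 n))"
      using assms(3) by (simp add: comp_def)
  qed
  then obtain z \<rho> where z: "?P z" "\<And>n. \<rho> n \<in> B \<and> openin (\<rho> n) (snd (z n))"
    "\<And>N z' r. ?P z' \<Longrightarrow> \<forall>i<N. z' i = z i \<Longrightarrow> r \<in> B \<Longrightarrow> openin r (snd (z' N)) \<Longrightarrow> top_le (\<rho> N) r"
    by blast
  have "minimal_bad_sequence X R B (fst \<circ> z) (snd \<circ> z) \<rho>"
  proof (unfold_locales)
    fix x' V' N r
    assume "bad_sequence B x' V'" "\<forall>i<N. x' i = (fst \<circ> z) i \<and> V' i = (snd \<circ> z) i"
      "r \<in> B" "openin r (V' N)"
    then show "top_le (\<rho> N) r"
      using z(3)[of "\<lambda>n. (x' n, V' n)" N r] by (simp add: comp_def prod_eq_iff)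
  qed (use assms z in auto)
  then show ?thesis by blast
qed

lemma noetherian_tsup:
  assumes D: "\<And>d. d \<in> D \<Longrightarrow> d \<in> tower" "\<And>d. d \<in> D \<Longrightarrow> noetherian_top d"
  shows "noetherian_top (tsup X D)"
proof (rule ccontr)
  assume "\<not> noetherian_top (tsup X D)"
  then obtain x V where bad: "bad_sequence {tsup X D} x V"
    using noetherian_top_iff_no_bad_sequence by blast
  define B where "B = {t\<in>tower. \<exists>d\<in>D. top_le t d}"
  obtain U where "bad_sequence D x U"
    using bad_sequence_tsup_tower[OF D(1) bad] by blast
  then have "bad_sequence B x U"
    by (rule bad_sequence_mono) (use D(1) top_le_refl in \<open>unfold B_def, blast\<close>)
  moreover have "B \<subseteq> tower" "\<And>b t. b \<in> B \<Longrightarrow> t \<in> tower \<Longrightarrow> top_le t b \<Longrightarrow> t \<in> B"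
    unfolding B_def using top_le_trans by blast+
  ultimately obtain x' V' \<rho> where "minimal_bad_sequence X R B x' V' \<rho>"
    using exists_minimal_bad_sequence by blast
  then have "\<not> (\<forall>b\<in>B. noetherian_top b)"
    by (rule minimal_bad_sequence.not_all_noetherian)
  then show False
    using D(2) noetherian_top_coarser unfolding B_def by blast
qed

lemma noetherian_tower: "t \<in> tower \<Longrightarrow> noetherian_top t"
  by (induction rule: tower.induct) (simp_all add: noetherian_R topspace_tower noetherian_tsup)

end

theorem mainTheorem1:
  fixes X :: "'a set" and R :: "'a topology \<Rightarrow> 'a topology"
  assumes "topology_expander X R"
  shows "\<exists>\<tau>. is_least_fixpoint X R \<tau> \<and> noetherian_top \<tau>"
proof -
  interpret expander X R by (rule expander.intro) (rule assms)
  show ?thesis using is_least_fixpoint_mu noetherian_tower[OF mu_in_tower] by blast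
qed

end
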